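(* Let $R$ be a ring, $n$ a positive integer, $P$ a divided weakly prime ideal of $R$, and $I$ a weakly $n$-absorbing ideal of $R$ with $\sqrt{I}=P$. Then $I$ is a weakly primary ideal of $R$.
   Context: All rings are commutative with $1\neq0$. A proper ideal $P$ is weakly prime if $0\neq ab\in P$ implies $a\in P$ or $b\in P$; a weakly prime ideal $P$ is divided if $P\subset xR$ for every $x\in R\setminus P$. A proper ideal $I$ is weakly primary if $0\neq ab\in I$ implies $a\in I$ or $b\in\sqrt{I}$. A proper ideal $I$ is weakly $n$-absorbing if whenever $0\neq a_1\cdots a_{n+1}\in I$ with $a_1,\dots,a_{n+1}\in R$, there are $n$ of the $a_i$'s whose product is in $I$. *)

theory Defs
  imports Main
begin

definition is_ideal :: "'a::comm_ring_1 set \<Rightarrow> bool" where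
  "is_ideal I \<longleftrightarrow> 0 \<in> I \<and> (\<forall>x\<in>I. \<forall>y\<in>I. x + y \<in> I) \<and> (\<forall>x\<in>I. - x \<in> I)
     \<and> (\<forall>r. \<forall>x\<in>I. r * x \<in> I)"

definition proper_ideal :: "'a::comm_ring_1 set \<Rightarrow> bool" where
  "proper_ideal I \<longleftrightarrow> is_ideal I \<and> I \<noteq> UNIV"

definition rad :: "'a::comm_ring_1 set \<Rightarrow> 'a set" where
  "rad I = {x. \<exists>k::nat. x ^ k \<in> I}"

definition weakly_prime :: "'a::comm_ring_1 set \<Rightarrow> bool" where
  "weakly_prime P \<longleftrightarrow> proper_ideal P \<and>
     (\<forall>a b. a * b \<noteq> 0 \<and> a * b \<in> P \<longrightarrow> a \<in> P \<or> b \<in> P)"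

definition divided_weakly_prime :: "'a::comm_ring_1 set \<Rightarrow> bool" where
  "divided_weakly_prime P \<longleftrightarrow> weakly_prime P \<and>
     (\<forall>x. x \<notin> P \<longrightarrow> P \<subseteq> {x * r | r. True})"

definition weakly_primary :: "'a::comm_ring_1 set \<Rightarrow> bool" where
  "weakly_primary I \<longleftrightarrow> proper_ideal I \<and>
     (\<forall>a b. a * b \<noteq> 0 \<and> a * b \<in> I \<longrightarrow> a \<in> I \<or> b \<in> rad I)"

text \<open>Elements a_0,...,a_n (n+1 of them); some n of them (omit index j) have product in I.\<close>
definition weakly_n_absorbing :: "nat \<Rightarrow> 'a::comm_ring_1 set \<Rightarrow> bool" where
  "weakly_n_absorbing n I \<longleftrightarrow> proper_ideal I \<and>
     (\<forall>a :: nat \<Rightarrow> 'a. (\<Prod>i\<le>n. a i) \<noteq> 0 \<and> (\<Prod>i\<le>n. a i) \<in> I \<longrightarrow>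
        (\<exists>j\<le>n. (\<Prod>i\<in>{..n} - {j}. a i) \<in> I))"

end

theory Submission
  imports Defs
begin

text \<open>
  Let \<open>a b \<noteq> 0\<close> lie in \<open>I\<close> with \<open>b \<notin> \<surd>I = P\<close>. Then \<open>a \<in> P\<close>, and since \<open>b\<^sup>n\<^sup>-\<^sup>1 \<notin> P\<close> the
  divided property gives \<open>a = b\<^sup>n\<^sup>-\<^sup>1 c\<close>. Now \<open>a b = c \<cdot> b \<cdots> b\<close> is a nonzero product of \<open>n + 1\<close>
  factors in \<open>I\<close>, so either \<open>b\<^sup>n \<in> I\<close>, which is impossible, or \<open>c b\<^sup>n\<^sup>-\<^sup>1 = a \<in> I\<close>.
\<close>

lemma prod_if_zero_const:
  fixes c b :: "'a::comm_monoid_mult"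
  assumes "finite A"
  shows "(\<Prod>i\<in>A. if i = (0::nat) then c else b) = (if 0 \<in> A then c * b ^ (card A - 1) else b ^ card A)"
proof -
  have "(\<Prod>i\<in>A. if i = 0 then c else b) = (\<Prod>i\<in>A \<inter> {0}. c) * (\<Prod>i\<in>A - {0}. b)"
    using prod.If_cases[OF assms, of "\<lambda>i. i = 0" "\<lambda>_. c" "\<lambda>_. b"]
    by (simp add: Diff_eq Collect_conv_if)
  also have "\<dots> = (if 0 \<in> A then c * b ^ (card A - 1) else b ^ card A)"
    using assms by (auto simp: card_Diff_singleton)
  finally show ?thesis .
qed

lemma weakly_n_absorbing_mult_power:
  fixes I :: "'a::comm_ring_1 set"
  assumes "weakly_n_absorbing n I" and "c * b ^ n \<noteq> 0" and "c * b ^ n \<in> I"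
  shows "b ^ n \<in> I \<or> c * b ^ (n - 1) \<in> I"
proof -
  define f where "f i = (if i = 0 then c else b)" for i :: nat
  have "(\<Prod>i\<le>n. f i) = c * b ^ n"
    unfolding f_def by (simp add: prod_if_zero_const)
  then have "\<exists>j\<le>n. (\<Prod>i\<in>{..n} - {j}. f i) \<in> I"
    using assms unfolding weakly_n_absorbing_def by simp
  then obtain j where "j \<le> n" and "(\<Prod>i\<in>{..n} - {j}. f i) \<in> I" by blast
  moreover have "(\<Prod>i\<in>{..n} - {j}. f i) = (if j = 0 then b ^ n else c * b ^ (n - 1))"
    using \<open>j \<le> n\<close> unfolding f_def by (simp add: prod_if_zero_const card_Diff_singleton)
  ultimately show ?thesis by (auto split: if_splits)
qed

lemma mem_rad_of_power_mem_rad: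
  assumes "x ^ k \<in> rad I"
  shows "x \<in> rad I"
proof -
  obtain m where "(x ^ k) ^ m \<in> I" using assms unfolding rad_def by blast
  then show ?thesis unfolding rad_def by (auto simp: power_mult[symmetric])
qed

lemma divided_weakly_primeD:
  assumes "divided_weakly_prime P" and "a \<in> P" and "x \<notin> P"
  obtains c where "a = x * c"
  using assms unfolding divided_weakly_prime_def by blast

theorem mainTheorem16:
  fixes P I :: "'a::comm_ring_1 set" and n :: nat
  assumes "n \<ge> 1"
    and "divided_weakly_prime P"
    and "weakly_n_absorbing n I"
    and "rad I = P"
  shows "weakly_primary I"
  unfolding weakly_primary_def
proof (intro conjI allI impI)
  show "proper_ideal I" using assms(3) unfolding weakly_n_absorbing_def by blast
  fix a b assume ab: "a * b \<noteq> 0 \<and> a * b \<in> I"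
  show "a \<in> I \<or> b \<in> rad I"
  proof (rule disjCI)
    assume b_notin: "b \<notin> rad I"
    have "a * b \<in> P" using ab assms(4) unfolding rad_def by (auto intro: exI[of _ 1])
    then have "a \<in> P"
      using ab b_notin assms(2,4) unfolding divided_weakly_prime_def weakly_prime_def by blast
    moreover have "b ^ (n - 1) \<notin> P" using b_notin assms(4) mem_rad_of_power_mem_rad by blast
    ultimately obtain c where a_eq: "a = b ^ (n - 1) * c" by (rule divided_weakly_primeD[OF assms(2)])
    have "c * b ^ n = a * b"
      using assms(1) unfolding a_eq by (cases n) (simp_all add: algebra_simps)
    then have "b ^ n \<in> I \<or> c * b ^ (n - 1) \<in> I"
      using ab assms(3) by (intro weakly_n_absorbing_mult_power) simp_all
    moreover have "b ^ n \<notin> I" using b_notin unfolding rad_def by blast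
    ultimately show "a \<in> I" unfolding a_eq by (simp add: mult.commute)
  qed
qed

end
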